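(* Let $V$ be a regular inhomogeneous $Y$-random evolution, $(s,t) \in \Delta_J$ and $f \in Y_1$. Then on $\Omega$: \[ V(s,t)f=f+\int_s^t V(s,u)A_{x(u)}(u)f\, du+\sum_{k=1}^{N_s(t)} V(s,T_k(s)^-) [D(x_{k-1}(s),x_k(s))-I]f, \] where $V(s,r^-)f=\lim_{u\uparrow r}V(s,u)f$.
   Context: $(Y,\|\cdot\|)$ is a real separable Banach space with Borel $\sigma$-algebra $\mathcal Y$, $(Y_1,\|\cdot\|_{Y_1})$ a real separable Banach space continuously embedded in $Y$; $J$ is $\mathbb{R}^+$ or $[0,T_\infty]$, $\Delta_J=\{(s,t)\in J^2:s\le t\}$, $J(s)=\{t\in J:t\ge s\}$. An inhomogeneous $Y$-semigroup is a map $\Gamma:\Delta_J\to\mathcal B(Y)$ with $\Gamma(t,t)=I$ and $\Gamma(s,r)\Gamma(r,t)=\Gamma(s,t)$ for $s\le r\le t$. Generator: $\mathcal D(A_\Gamma(t))$ is the set of $f\in Y$ such that $\lim_{h\downarrow0,\,t+h\in J}h^{-1}(\Gamma(t,t+h)-I)f$ and $\lim_{h\downarrow0,\,t-h\in J}h^{-1}(\Gamma(t-h,t)-I)f$ exist and are equal ($=A_\Gamma(t)f$), $\mathcal D(A_\Gamma)=\bigcap_t\mathcal D(A_\Gamma(t))$. $\Gamma$ is regular if $Y_1\subseteq\mathcal D(A_\Gamma)$; $\Gamma(s,t)Y_1\subseteq Y_1$ and $u\mapsto\Gamma(u,t)f$ is $\|\cdot\|_{Y_1}$-continuous for $f\in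 Y_1$; $u\mapsto\Gamma(s,u)f$ is $Y$-continuous on $J(s)$ for $f\in Y$; and $u\mapsto\Gamma(s,u)A_\Gamma(u)f$ is Bochner integrable on $[s,t]$ for $f\in Y_1$. Probabilistic setting: $(\Omega,\mathcal F,\mathbb P)$ complete; $X$ finite with all subsets as $\sigma$-algebra; $(x_n,T_n)_{n\ge0}$ a Markov renewal process ($x_n\in X$, $T_0=0$, $T_n=\sum_{k\le n}\tau_k$, $\tau_k>0$) with semi-Markov kernel $Q$; $N(t)=\sup\{n:T_n\le t\}$, $\Omega$ restricted to the full-measure event $\{N(t)<\infty\ \forall t\in\mathbb Q\}$; $x(t)=x_{N(t)}$; $N_s(t)=N(t)-N(s)$, $T_0(s)=s$, $T_n(s)=T_{N(s)+n}$ ($n\ge1$), $x_n(s)=x(T_n(s))$. $(\Gamma_x)_{x\in X}$ inhomogeneous $Y$-semigroups with generators $A_x$, with $(r,t,x,f)\mapsto\Gamma_x(r\wedge t,r\vee t)f$ jointly measurable; $(D(x,y))_{x,y}\subseteq\mathcal B(Y)$ contractions with $(x,y,f)\mapsto D(x,y)f$ measurable. The random evolution is $V(s,t)=\big[\prod_{k=1}^{N_s(t)}\Gamma_{x_{k-1}(s)}(T_{k-1}(s),T_k(s))D(x_{k-1}(s),x_k(s))\big]\Gamma_{x(t)}(T_{N_s(t)}(s),t)$ (product ordered left to right, empty product $I$), pathwise on $\Delta_J\times\Omega$; $V$ is regular if every $\Gamma_x$ is regular. *)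

theory Defs
  imports "HOL-Probability.Probability"
begin

definition inhom_semigroup :: "real set \<Rightarrow> (real \<Rightarrow> real \<Rightarrow> ('y::real_normed_vector \<Rightarrow>\<^sub>L 'y)) \<Rightarrow> bool" where
  "inhom_semigroup J \<Gamma> \<longleftrightarrow>
     (\<forall>t\<in>J. \<Gamma> t t = id_blinfun) \<and>
     (\<forall>s\<in>J. \<forall>r\<in>J. \<forall>t\<in>J. s \<le> r \<and> r \<le> t \<longrightarrow> \<Gamma> s r o\<^sub>L \<Gamma> r t = \<Gamma> s t)"

text \<open>Both one-sided difference quotients at t converge to L (a one-sided limit
 that is not available inside J is vacuous, since the filter is then trivial).\<close>
definition gen_lims :: "real set \<Rightarrow> (real \<Rightarrow> real \<Rightarrow> ('y::real_normed_vector \<Rightarrow>\<^sub>L 'y)) \<Rightarrow> real \<Rightarrow> 'y \<Rightarrow> 'y \<Rightarrow> bool" where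
  "gen_lims J \<Gamma> t f L \<longleftrightarrow>
     ((\<lambda>h. (1 / h) *\<^sub>R (blinfun_apply (\<Gamma> t (t + h)) f - f)) \<longlongrightarrow> L) (at 0 within {h. 0 < h \<and> t + h \<in> J}) \<and>
     ((\<lambda>h. (1 / h) *\<^sub>R (blinfun_apply (\<Gamma> (t - h) t) f - f)) \<longlongrightarrow> L) (at 0 within {h. 0 < h \<and> t - h \<in> J})"

definition gen_dom :: "real set \<Rightarrow> (real \<Rightarrow> real \<Rightarrow> ('y::real_normed_vector \<Rightarrow>\<^sub>L 'y)) \<Rightarrow> real \<Rightarrow> 'y \<Rightarrow> bool" where
  "gen_dom J \<Gamma> t f \<longleftrightarrow> (\<exists>L. gen_lims J \<Gamma> t f L)"

definition gen :: "real set \<Rightarrow> (real \<Rightarrow> real \<Rightarrow> ('y::real_normed_vector \<Rightarrow>\<^sub>L 'y)) \<Rightarrow> real \<Rightarrow> 'y \<Rightarrow> 'y" where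
  "gen J \<Gamma> t f = (THE L. gen_lims J \<Gamma> t f L)"

text \<open>Regularity. Y1 is modelled as a separable Banach space 'z together with an
 injective bounded linear (continuous) embedding iota into Y.\<close>
definition regular_semigroup ::
  "real set \<Rightarrow> ('z::{banach,second_countable_topology} \<Rightarrow> 'y::{banach,second_countable_topology})
    \<Rightarrow> (real \<Rightarrow> real \<Rightarrow> ('y \<Rightarrow>\<^sub>L 'y)) \<Rightarrow> bool" where
  "regular_semigroup J \<iota> \<Gamma> \<longleftrightarrow>
     inhom_semigroup J \<Gamma> \<and>
     (\<forall>t\<in>J. \<forall>f. gen_dom J \<Gamma> t (\<iota> f)) \<and>
     (\<forall>s\<in>J. \<forall>t\<in>J. s \<le> t \<longrightarrow> (\<forall>f. blinfun_apply (\<Gamma> s t) (\<iota> f) \<in> range \<iota>)) \<and>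
     (\<forall>t\<in>J. \<forall>f. continuous_on {u\<in>J. u \<le> t} (\<lambda>u. the_inv \<iota> (blinfun_apply (\<Gamma> u t) (\<iota> f)))) \<and>
     (\<forall>s\<in>J. \<forall>f. continuous_on {u\<in>J. s \<le> u} (\<lambda>u. blinfun_apply (\<Gamma> s u) f)) \<and>
     (\<forall>s\<in>J. \<forall>t\<in>J. s \<le> t \<longrightarrow> (\<forall>f.
        set_integrable lborel {s..t} (\<lambda>u. blinfun_apply (\<Gamma> s u) (gen J \<Gamma> u (\<iota> f)))))"

definition semi_markov_kernel :: "('x::finite \<Rightarrow> 'x \<Rightarrow> real \<Rightarrow> real) \<Rightarrow> bool" where
  "semi_markov_kernel Q \<longleftrightarrow>
     (\<forall>x y. mono (Q x y) \<and> (\<forall>t. 0 \<le> Q x y t \<and> continuous (at_right t) (Q x y)) \<and> Q x y 0 = 0) \<and>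
     (\<forall>x. ((\<lambda>t. \<Sum>y\<in>UNIV. Q x y t) \<longlongrightarrow> 1) at_top)"

definition mrp_hist :: "'w measure \<Rightarrow> (nat \<Rightarrow> 'w \<Rightarrow> 'x) \<Rightarrow> (nat \<Rightarrow> 'w \<Rightarrow> real) \<Rightarrow> nat \<Rightarrow> 'w set set" where
  "mrp_hist M xs \<tau> n =
     {xs k -` B \<inter> space M | k B. k \<le> n} \<union>
     {\<tau> k -` B \<inter> space M | k B. 1 \<le> k \<and> k \<le> n \<and> B \<in> sets borel}"

definition markov_renewal ::
  "'w measure \<Rightarrow> (nat \<Rightarrow> 'w \<Rightarrow> 'x::finite) \<Rightarrow> (nat \<Rightarrow> 'w \<Rightarrow> real) \<Rightarrow> ('x \<Rightarrow> 'x \<Rightarrow> real \<Rightarrow> real) \<Rightarrow> bool" where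
  "markov_renewal M xs \<tau> Q \<longleftrightarrow>
     (\<forall>n. xs n \<in> measurable M (count_space UNIV)) \<and>
     (\<forall>n. \<tau> n \<in> borel_measurable M) \<and>
     (\<forall>\<omega>\<in>space M. \<forall>k\<ge>1. 0 < \<tau> k \<omega>) \<and>
     (\<forall>n y t A. A \<in> sigma_sets (space M) (mrp_hist M xs \<tau> n) \<longrightarrow>
        measure M ({\<omega>\<in>space M. xs (Suc n) \<omega> = y \<and> \<tau> (Suc n) \<omega> \<le> t} \<inter> A)
          = set_lebesgue_integral M A (\<lambda>\<omega>. Q (xs n \<omega>) y t))"

definition Tn :: "(nat \<Rightarrow> 'w \<Rightarrow> real) \<Rightarrow> nat \<Rightarrow> 'w \<Rightarrow> real" where
  "Tn \<tau> n \<omega> = (\<Sum>k\<in>{1..n}. \<tau> k \<omega>)"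

definition Nc :: "(nat \<Rightarrow> 'w \<Rightarrow> real) \<Rightarrow> real \<Rightarrow> 'w \<Rightarrow> nat" where
  "Nc \<tau> t \<omega> = Max {n. Tn \<tau> n \<omega> \<le> t}"

definition xt :: "(nat \<Rightarrow> 'w \<Rightarrow> real) \<Rightarrow> (nat \<Rightarrow> 'w \<Rightarrow> 'x) \<Rightarrow> real \<Rightarrow> 'w \<Rightarrow> 'x" where
  "xt \<tau> xs t \<omega> = xs (Nc \<tau> t \<omega>) \<omega>"

definition Ns :: "(nat \<Rightarrow> 'w \<Rightarrow> real) \<Rightarrow> real \<Rightarrow> real \<Rightarrow> 'w \<Rightarrow> nat" where
  "Ns \<tau> s t \<omega> = Nc \<tau> t \<omega> - Nc \<tau> s \<omega>"

definition Tks :: "(nat \<Rightarrow> 'w \<Rightarrow> real) \<Rightarrow> real \<Rightarrow> nat \<Rightarrow> 'w \<Rightarrow> real" where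
  "Tks \<tau> s k \<omega> = (if k = 0 then s else Tn \<tau> (Nc \<tau> s \<omega> + k) \<omega>)"

definition xks :: "(nat \<Rightarrow> 'w \<Rightarrow> real) \<Rightarrow> (nat \<Rightarrow> 'w \<Rightarrow> 'x) \<Rightarrow> real \<Rightarrow> nat \<Rightarrow> 'w \<Rightarrow> 'x" where
  "xks \<tau> xs s k \<omega> = xt \<tau> xs (Tks \<tau> s k \<omega>) \<omega>"

fun prodL :: "nat \<Rightarrow> (nat \<Rightarrow> ('y::real_normed_vector \<Rightarrow>\<^sub>L 'y)) \<Rightarrow> ('y \<Rightarrow>\<^sub>L 'y)" where
  "prodL 0 F = id_blinfun"
| "prodL (Suc n) F = prodL n F o\<^sub>L F (Suc n)"

definition rand_evol ::
  "(nat \<Rightarrow> 'w \<Rightarrow> real) \<Rightarrow> (nat \<Rightarrow> 'w \<Rightarrow> 'x) \<Rightarrow> ('x \<Rightarrow> real \<Rightarrow> real \<Rightarrow> ('y::real_normed_vector \<Rightarrow>\<^sub>L 'y))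
    \<Rightarrow> ('x \<Rightarrow> 'x \<Rightarrow> ('y \<Rightarrow>\<^sub>L 'y)) \<Rightarrow> real \<Rightarrow> real \<Rightarrow> 'w \<Rightarrow> ('y \<Rightarrow>\<^sub>L 'y)" where
  "rand_evol \<tau> xs \<Gamma> D s t \<omega> =
     prodL (Ns \<tau> s t \<omega>)
       (\<lambda>k. \<Gamma> (xks \<tau> xs s (k - 1) \<omega>) (Tks \<tau> s (k - 1) \<omega>) (Tks \<tau> s k \<omega>)
            o\<^sub>L D (xks \<tau> xs s (k - 1) \<omega>) (xks \<tau> xs s k \<omega>))
     o\<^sub>L \<Gamma> (xt \<tau> xs t \<omega>) (Tks \<tau> s (Ns \<tau> s t \<omega>) \<omega>) t"

end

theory Submission
  imports Defs
begin

text \<open>Between consecutive jump times \<open>T_m(s) \<le> u < T_{m+1}(s)\<close> the random evolution is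
  \<open>V(s,u) = P_m \<Gamma>_{x_m}(T_m, u)\<close>, where \<open>P_m\<close> is the ordered product of the first \<open>m\<close>
  flow-then-jump factors. For \<open>f \<in> Y_1\<close> the forward equation
  \<open>\<partial>_u \<Gamma>(r,u) f = \<Gamma>(r,u) A(u) f\<close> integrates to
  \<open>P_m (\<Gamma>_{x_m}(T_m, u) f - f) = \<integral>_{T_m}^u V(s,v) A_{x(v)}(v) f dv\<close>; the left derivative
  requires \<open>\<Gamma>(r, \<cdot>)\<close> to be bounded on compact intervals, which is the uniform boundedness
  principle. At a jump the left limit of \<open>V(s,u) [D - I] f\<close> is
  \<open>P_{m+1} f - P_m \<Gamma>_{x_m}(T_m, T_{m+1}) f\<close>, so summing over the jumps telescopes to the
  formula.\<close>

lemma norm_blinfun_le_of_bounded_on_ball: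
  fixes T :: "'a::real_normed_vector \<Rightarrow>\<^sub>L 'b::real_normed_vector"
  assumes e: "0 < e" and bound: "\<And>g. g \<in> ball g0 e \<Longrightarrow> norm (T g) \<le> c"
  shows "norm T \<le> 4 * c / e"
proof (rule norm_blinfun_bound)
  have c: "0 \<le> c" using bound[of g0] e by (meson centre_in_ball norm_ge_zero order_trans)
  then show "0 \<le> 4 * c / e" using e by simp
  fix y
  show "norm (T y) \<le> 4 * c / e * norm y"
  proof (cases "y = 0")
    case True
    then show ?thesis by simp
  next
    case False
    define a where "a = e / (2 * norm y)"
    have a: "0 < a" using e False by (simp add: a_def)
    have "dist g0 (g0 + a *\<^sub>R y) = e / 2" using a e False by (simp add: dist_norm a_def)
    then have "norm (T (g0 + a *\<^sub>R y)) \<le> c" using e by (intro bound) simp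
    moreover have "norm (T g0) \<le> c" using e by (intro bound) simp
    ultimately have "norm (T (g0 + a *\<^sub>R y) - T g0) \<le> 2 * c"
      using norm_triangle_ineq4[of "T (g0 + a *\<^sub>R y)" "T g0"] by linarith
    moreover have "T y = (1 / a) *\<^sub>R (T (g0 + a *\<^sub>R y) - T g0)"
      using a by (simp add: blinfun.bilinear_simps)
    ultimately have "norm (T y) \<le> (1 / a) * (2 * c)"
      using a by (simp add: divide_right_mono)
    also have "\<dots> = 4 * c / e * norm y" using False e by (simp add: a_def field_simps)
    finally show ?thesis .
  qed
qed

lemma uniform_boundedness:
  fixes T :: "'i \<Rightarrow> ('a::banach \<Rightarrow>\<^sub>L 'b::real_normed_vector)"
  assumes pointwise: "\<And>g. \<exists>B. \<forall>i\<in>I. norm (T i g) \<le> B"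
  shows "\<exists>B. \<forall>i\<in>I. norm (T i) \<le> B"
proof -
  define C where "C n = (\<Inter>i\<in>I. {g. norm (T i g) \<le> real n})" for n :: nat
  have closed: "closed (C n)" for n
    unfolding C_def by (intro closed_INT ballI closed_Collect_le continuous_intros)
  have "(\<Union>n. C n) = UNIV"
  proof -
    have "g \<in> (\<Union>n. C n)" for g
    proof -
      obtain B where "\<forall>i\<in>I. norm (T i g) \<le> B" using pointwise by blast
      moreover obtain n where "B \<le> real n" using real_arch_simple by blast
      ultimately have "g \<in> C n" by (auto simp: C_def intro: order_trans)
      then show ?thesis by blast
    qed
    then show ?thesis by blast
  qed
  then have "\<exists>n. interior (C n) \<noteq> {}"
  proof (rule contrapos_pp)
    assume "\<not> (\<exists>n. interior (C n) \<noteq> {})"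
    then have "euclidean interior_of (\<Union>n. C n) = {}"
      using closed by (intro Baire_category_alt) (auto simp: completely_metrizable_space_euclidean)
    then show "(\<Union>n. C n) \<noteq> UNIV" by auto
  qed
  then obtain n g0 e where e: "0 < e" "ball g0 e \<subseteq> C n"
    by (meson ex_in_conv mem_interior)
  have "norm (T i) \<le> 4 * real n / e" if "i \<in> I" for i
    using e that by (intro norm_blinfun_le_of_bounded_on_ball) (auto simp: C_def)
  then show ?thesis by blast
qed

lemma bounded_norm_blinfun_on_compact:
  fixes T :: "'s::topological_space \<Rightarrow> ('a::banach \<Rightarrow>\<^sub>L 'b::real_normed_vector)"
  assumes "compact K" "\<And>g. continuous_on K (\<lambda>w. T w g)"
  shows "\<exists>B. \<forall>w\<in>K. norm (T w) \<le> B"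
proof (rule uniform_boundedness)
  fix g
  have "bounded ((\<lambda>w. T w g) ` K)"
    using assms by (intro compact_imp_bounded compact_continuous_image)
  then show "\<exists>B. \<forall>w\<in>K. norm (T w g) \<le> B" by (auto simp: bounded_iff)
qed

lemma has_integral_indicator_scaleR:
  fixes A :: "'n::euclidean_space set" and y :: "'b::banach"
  assumes "A \<in> sets borel" "emeasure lborel A < \<infinity>"
  shows "((\<lambda>x. indicator A x *\<^sub>R y) has_integral (measure lborel A *\<^sub>R y)) UNIV"
proof -
  have "((\<lambda>x. (1::real) *\<^sub>R y) has_integral (measure lborel A *\<^sub>R y)) A"
    using has_integral_scaleR_left[OF has_integral_measure_lborel[OF assms]] .
  then have "((\<lambda>x. if x \<in> A then (1::real) *\<^sub>R y else 0) has_integral (measure lborel A *\<^sub>R y)) UNIV"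
    by (rule has_integral_restrict_UNIV[THEN iffD2])
  moreover have "(\<lambda>x. indicator A x *\<^sub>R y) = (\<lambda>x. if x \<in> A then (1::real) *\<^sub>R y else 0)"
    by (auto simp: indicator_def fun_eq_iff)
  ultimately show ?thesis by simp
qed

lemma has_integral_simple_bochner_integral:
  fixes f :: "'n::euclidean_space \<Rightarrow> 'b::{banach,second_countable_topology}"
  assumes "Bochner_Integration.simple_bochner_integrable lborel f"
  shows "(f has_integral Bochner_Integration.simple_bochner_integral lborel f) UNIV"
proof -
  from assms have sf: "simple_function lborel f"
    and fin: "emeasure lborel {y. f y \<noteq> 0} \<noteq> \<infinity>"
    by (auto elim!: Bochner_Integration.simple_bochner_integrable.cases)
  have finR: "finite (f ` UNIV)" using sf by (auto simp: simple_function_def)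
  have f_eq: "f x = (\<Sum>y\<in>f ` UNIV. indicator {x. f x = y} x *\<^sub>R y)" for x
  proof -
    have "(\<Sum>y\<in>f ` UNIV. indicator {x. f x = y} x *\<^sub>R y) = (\<Sum>y\<in>{f x}. indicator {x. f x = y} x *\<^sub>R y)"
      using finR by (intro sum.mono_neutral_right) (auto simp: indicator_def)
    then show ?thesis by simp
  qed
  have "((\<lambda>x. indicator {x. f x = y} x *\<^sub>R y) has_integral measure lborel {x. f x = y} *\<^sub>R y) UNIV"
    if "y \<in> f ` UNIV" for y
  proof (cases "y = 0")
    case False
    have level_set: "{x. f x = y} \<in> sets borel"
      using sf that by (auto simp: simple_function_def vimage_def)
    have "f -` (- {0}) \<inter> space lborel \<in> sets lborel"
      using borel_measurable_simple_function[OF sf] by (rule measurable_sets) auto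
    then have "{x. f x \<noteq> 0} \<in> sets lborel" by (simp add: vimage_def Compl_eq)
    then have "emeasure lborel {x. f x = y} \<le> emeasure lborel {x. f x \<noteq> 0}"
      using False by (intro emeasure_mono) auto
    also have "\<dots> < \<infinity>" using fin by (simp add: less_top)
    finally show ?thesis using level_set by (intro has_integral_indicator_scaleR) auto
  qed simp
  then have "((\<lambda>x. \<Sum>y\<in>f ` UNIV. indicator {x. f x = y} x *\<^sub>R y) has_integral
      (\<Sum>y\<in>f ` UNIV. measure lborel {x. f x = y} *\<^sub>R y)) UNIV"
    by (intro has_integral_sum finR)
  moreover have "Bochner_Integration.simple_bochner_integral lborel f =
      (\<Sum>y\<in>f ` UNIV. measure lborel {x. f x = y} *\<^sub>R y)"
    by (simp add: Bochner_Integration.simple_bochner_integral_def)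
  ultimately have "((\<lambda>x. \<Sum>y\<in>f ` UNIV. indicator {x. f x = y} x *\<^sub>R y) has_integral
      Bochner_Integration.simple_bochner_integral lborel f) UNIV"
    by simp
  then show ?thesis by (rule has_integral_eq[rotated]) (rule f_eq[symmetric])
qed

text \<open>The fundamental theorem of calculus is available for the Henstock--Kurzweil integral,
  while the statement uses the Bochner integral. For Euclidean-space valued functions the two are
  compared by \<open>has_integral_integral_lborel\<close>; for Banach space valued ones we approximate by
  simple functions in \<open>L\<^sup>1\<close>.\<close>

lemma lebesgue_integral_eq_has_integral:
  fixes g :: "'n::euclidean_space \<Rightarrow> 'b::{banach,second_countable_topology}"
  assumes g: "integrable lborel g" and hk: "(g has_integral I) UNIV"
  shows "integral\<^sup>L lborel g = I"
proof -
  obtain x where gx: "has_bochner_integral lborel g x" using g by (auto elim: integrable.cases)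
  then obtain s where s: "\<And>i. Bochner_Integration.simple_bochner_integrable lborel (s i)"
    and L1: "(\<lambda>i. \<integral>\<^sup>+z. norm (g z - s i z) \<partial>lborel) \<longlonglongrightarrow> 0"
    and sx: "(\<lambda>i. Bochner_Integration.simple_bochner_integral lborel (s i)) \<longlonglongrightarrow> x"
    by (rule has_bochner_integral.cases) blast
  define a where "a i = integral\<^sup>L lborel (\<lambda>z. norm (g z - s i z))" for i
  have int_diff: "integrable lborel (\<lambda>z. norm (g z - s i z))" for i
    using has_bochner_integral_simple_bochner_integrable[OF s]
    by (intro integrable_norm Bochner_Integration.integrable_diff g integrable.intros)
  have "(\<integral>\<^sup>+z. norm (g z - s i z) \<partial>lborel) = ennreal (a i)" for i
    unfolding a_def using int_diff by (intro nn_integral_eq_integral) auto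
  then have "(\<lambda>i. ennreal (a i)) \<longlonglongrightarrow> ennreal 0" using L1 by simp
  then have a: "a \<longlonglongrightarrow> 0" by (subst (asm) tendsto_ennreal_iff) (auto simp: a_def)
  have "norm (I - x) \<le> a i + norm (Bochner_Integration.simple_bochner_integral lborel (s i) - x)" for i
  proof -
    let ?S = "Bochner_Integration.simple_bochner_integral lborel (s i)"
    have "((\<lambda>z. g z - s i z) has_integral (I - ?S)) UNIV"
      using hk has_integral_simple_bochner_integral[OF s] by (rule has_integral_diff)
    then have "norm (I - ?S) \<le> integral UNIV (\<lambda>z. norm (g z - s i z))"
      using integral_norm_bound_integral[of "\<lambda>z. g z - s i z" UNIV "\<lambda>z. norm (g z - s i z)"]
        integrable_on_lborel[OF int_diff] by (auto simp: integral_unique integrable_on_def)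
    also have "\<dots> = a i" unfolding a_def using integral_lborel[OF int_diff] .
    finally show ?thesis using norm_triangle_ineq[of "I - ?S" "?S - x"] by simp
  qed
  moreover have "(\<lambda>i. a i + norm (Bochner_Integration.simple_bochner_integral lborel (s i) - x)) \<longlonglongrightarrow> 0"
    using tendsto_add[OF a tendsto_norm_zero[OF LIM_zero[OF sx]]] by simp
  ultimately have "norm (I - x) \<le> 0" by (intro LIMSEQ_le_const) (auto simp: not_le)
  then show ?thesis using has_bochner_integral_integral_eq[OF gx] by simp
qed

lemma set_lebesgue_integral_eq_has_integral:
  fixes g :: "real \<Rightarrow> 'b::{banach,second_countable_topology}"
  assumes "set_integrable lborel S g" "(g has_integral I) S"
  shows "(LINT x:S|lborel. g x) = I"
proof -
  have "((\<lambda>x. if x \<in> S then g x else 0) has_integral I) UNIV"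
    using assms(2) by (rule has_integral_restrict_UNIV[THEN iffD2])
  moreover have "(\<lambda>x. if x \<in> S then g x else 0) = (\<lambda>x. indicator S x *\<^sub>R g x)"
    by (auto simp: indicator_def fun_eq_iff)
  ultimately have "((\<lambda>x. indicator S x *\<^sub>R g x) has_integral I) UNIV" by simp
  then show ?thesis
    using assms(1) unfolding set_integrable_def set_lebesgue_integral_def
    by (rule lebesgue_integral_eq_has_integral[rotated])
qed

lemma has_vector_derivative_of_difference_quotient:
  fixes F :: "real \<Rightarrow> 'b::real_normed_vector"
  assumes "((\<lambda>h. (1 / h) *\<^sub>R (F (x + h) - F x)) \<longlongrightarrow> D) (at 0)"
  shows "(F has_vector_derivative D) (at x)"
  unfolding has_vector_derivative_def has_derivative_at
proof (intro conjI)
  show "bounded_linear (\<lambda>h. h *\<^sub>R D)" by (rule bounded_linear_scaleR_left)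
  have lim: "((\<lambda>h. norm ((1 / h) *\<^sub>R (F (x + h) - F x) - D)) \<longlongrightarrow> 0) (at 0)"
    using tendsto_diff[OF assms tendsto_const[of D]] by (intro tendsto_norm_zero) simp
  have eq: "norm ((1 / h) *\<^sub>R (F (x + h) - F x) - D) = norm (F (x + h) - F x - h *\<^sub>R D) / norm h"
    if "h \<noteq> 0" for h
  proof -
    have "(1 / h) *\<^sub>R (F (x + h) - F x) - D = (1 / h) *\<^sub>R (F (x + h) - F x - h *\<^sub>R D)"
      using that by (simp add: algebra_simps)
    then show ?thesis by (simp add: divide_inverse mult.commute)
  qed
  show "((\<lambda>h. norm (F (x + h) - F x - h *\<^sub>R D) / norm h) \<longlongrightarrow> 0) (at 0)"
    using lim by (rule Lim_transform_eventually) (simp add: eventually_at_filter eq)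
qed

lemma at_right_le_at_within:
  fixes S :: "real set"
  assumes "0 < e" "{0<..<e} \<subseteq> S"
  shows "at_right 0 \<le> at 0 within S"
proof -
  have "at (0::real) within {0<..<e} = at_right 0"
    by (rule at_within_nhd[of _ "{-e<..<e}"]) (use assms in auto)
  then show ?thesis using at_le[OF assms(2), of 0] by simp
qed

lemma inhom_semigroup_apply_compose:
  assumes "inhom_semigroup J \<Gamma>" "a \<in> J" "b \<in> J" "c \<in> J" "a \<le> b" "b \<le> c"
  shows "\<Gamma> a b (\<Gamma> b c g) = \<Gamma> a c g"
  using assms unfolding inhom_semigroup_def by (metis blinfun_apply_blinfun_compose)

text \<open>The generator is well defined wherever the right difference quotient is taken along a
  nontrivial filter, i.e. away from the right end point of \<open>J\<close>.\<close>

lemma gen_lims_gen: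
  assumes dom: "gen_dom J \<Gamma> v g" and J: "is_interval J" and v: "v \<in> J" "u \<in> J" "v < u"
  shows "gen_lims J \<Gamma> v g (gen J \<Gamma> v g)"
proof -
  have "{0<..<u - v} \<subseteq> {h. 0 < h \<and> v + h \<in> J}"
    using v by (auto intro!: mem_is_interval_1_I[OF J v(1) v(2)])
  then have "at_right 0 \<le> at (0::real) within {h. 0 < h \<and> v + h \<in> J}"
    using v by (intro at_right_le_at_within[of "u - v"]) auto
  then have nontrivial: "at (0::real) within {h. 0 < h \<and> v + h \<in> J} \<noteq> bot"
    using trivial_limit_at_right_real by (metis bot.extremum_uniqueI)
  obtain L where L: "gen_lims J \<Gamma> v g L" using dom unfolding gen_dom_def by blast
  moreover have "L' = L" if "gen_lims J \<Gamma> v g L'" for L'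
    using tendsto_unique[OF nontrivial] that L unfolding gen_lims_def by blast
  ultimately have "\<exists>!L. gen_lims J \<Gamma> v g L" by blast
  then show ?thesis unfolding gen_def by (rule theI')
qed

lemma inhom_semigroup_right_quotient:
  fixes \<Gamma> :: "real \<Rightarrow> real \<Rightarrow> ('y::real_normed_vector \<Rightarrow>\<^sub>L 'y)"
  assumes sg: "inhom_semigroup J \<Gamma>" and J: "is_interval J" and lims: "gen_lims J \<Gamma> v g L"
    and r: "r \<in> J" "u \<in> J" "r \<le> v" "v < u"
  shows "((\<lambda>h. (1 / h) *\<^sub>R (\<Gamma> r (v + h) g - \<Gamma> r v g)) \<longlongrightarrow> \<Gamma> r v L) (at_right 0)"
proof -
  have J_between: "w \<in> J" if "r \<le> w" "w \<le> u" for w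
    using r that by (intro mem_is_interval_1_I[OF J r(1) r(2)])
  have "at_right 0 \<le> at 0 within {h. 0 < h \<and> v + h \<in> J}"
    using r J_between by (intro at_right_le_at_within[of "u - v"]) auto
  then have "((\<lambda>h. (1 / h) *\<^sub>R (\<Gamma> v (v + h) g - g)) \<longlongrightarrow> L) (at_right 0)"
    using lims unfolding gen_lims_def by (blast intro: tendsto_mono)
  then have "((\<lambda>h. \<Gamma> r v ((1 / h) *\<^sub>R (\<Gamma> v (v + h) g - g))) \<longlongrightarrow> \<Gamma> r v L) (at_right 0)"
    by (rule blinfun.tendsto[OF tendsto_const])
  moreover have "\<forall>\<^sub>F h in at_right 0. 0 < h \<and> h < u - v"
    using r unfolding eventually_at_right_field by (auto intro!: exI[of _ "u - v"])
  then have "\<forall>\<^sub>F h in at_right 0.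
      \<Gamma> r v ((1 / h) *\<^sub>R (\<Gamma> v (v + h) g - g)) = (1 / h) *\<^sub>R (\<Gamma> r (v + h) g - \<Gamma> r v g)"
  proof eventually_elim
    case (elim h)
    then have "\<Gamma> r v (\<Gamma> v (v + h) g) = \<Gamma> r (v + h) g"
      using r J_between by (intro inhom_semigroup_apply_compose[OF sg]) auto
    then show ?case by (simp add: blinfun.scaleR_right blinfun.diff_right)
  qed
  ultimately show ?thesis by (rule Lim_transform_eventually)
qed

lemma tendsto_blinfun_apply_bounded:
  fixes T :: "'i \<Rightarrow> ('a::real_normed_vector \<Rightarrow>\<^sub>L 'b::real_normed_vector)"
  assumes T: "((\<lambda>h. T h y) \<longlongrightarrow> l) F" and bound: "\<forall>\<^sub>F h in F. norm (T h) \<le> B"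
    and x: "(x \<longlongrightarrow> y) F"
  shows "((\<lambda>h. T h (x h)) \<longlongrightarrow> l) F"
proof -
  have "((\<lambda>h. T h (x h - y)) \<longlongrightarrow> 0) F"
  proof (rule Lim_null_comparison)
    show "\<forall>\<^sub>F h in F. norm (T h (x h - y)) \<le> B * norm (x h - y)"
      using bound
      by eventually_elim (meson norm_blinfun norm_ge_zero mult_right_mono order_trans)
    show "((\<lambda>h. B * norm (x h - y)) \<longlongrightarrow> 0) F"
      using x by (intro tendsto_mult_right_zero tendsto_norm_zero LIM_zero)
  qed
  from tendsto_add[OF this T] show ?thesis by (simp add: blinfun.diff_right)
qed

text \<open>On the left, \<open>\<Gamma> r v g - \<Gamma> r (v - h) g = \<Gamma> r (v - h) (\<Gamma> (v - h) v g - g)\<close> has the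
  moving operator in front of the difference quotient; the uniform boundedness principle bounds
  \<open>\<Gamma> r w\<close> for \<open>w \<in> {r..v}\<close>.\<close>

lemma inhom_semigroup_left_quotient:
  fixes \<Gamma> :: "real \<Rightarrow> real \<Rightarrow> ('y::banach \<Rightarrow>\<^sub>L 'y)"
  assumes sg: "inhom_semigroup J \<Gamma>" and J: "is_interval J" and lims: "gen_lims J \<Gamma> v g L"
    and cont: "\<And>g. continuous_on {w\<in>J. r \<le> w} (\<lambda>w. \<Gamma> r w g)"
    and r: "r \<in> J" "v \<in> J" "r < v"
  shows "((\<lambda>h. (1 / h) *\<^sub>R (\<Gamma> r (v + h) g - \<Gamma> r v g)) \<longlongrightarrow> \<Gamma> r v L) (at_left 0)"
proof -
  have J_between: "w \<in> J" if "r \<le> w" "w \<le> v" for w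
    using r that by (intro mem_is_interval_1_I[OF J r(1) r(2)])
  have evr: "\<forall>\<^sub>F h in at_right 0. 0 < h \<and> h < v - r"
    using r unfolding eventually_at_right_field by (auto intro!: exI[of _ "v - r"])
  have "at_right 0 \<le> at 0 within {h. 0 < h \<and> v - h \<in> J}"
    using r J_between by (intro at_right_le_at_within[of "v - r"]) auto
  then have quotient: "((\<lambda>h. (1 / h) *\<^sub>R (\<Gamma> (v - h) v g - g)) \<longlongrightarrow> L) (at_right 0)"
    using lims unfolding gen_lims_def by (blast intro: tendsto_mono)
  have "((\<lambda>w. \<Gamma> r w L) \<longlongrightarrow> \<Gamma> r v L) (at v within {w\<in>J. r \<le> w})"
    using cont[of L] r unfolding continuous_on_def by auto
  moreover have "filterlim (\<lambda>h. v - h) (at v within {w\<in>J. r \<le> w}) (at_right 0)"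
    unfolding filterlim_at
  proof
    show "\<forall>\<^sub>F h in at_right 0. v - h \<in> {w\<in>J. r \<le> w} \<and> v - h \<noteq> v"
      using evr by eventually_elim (simp add: J_between)
    show "((\<lambda>h. v - h) \<longlongrightarrow> v) (at_right 0)"
      using tendsto_diff[OF tendsto_const[of v] tendsto_ident_at[of 0 "{0<..}"]] by simp
  qed
  ultimately have "((\<lambda>h. \<Gamma> r (v - h) L) \<longlongrightarrow> \<Gamma> r v L) (at_right 0)"
    by (rule filterlim_compose)
  moreover have "{r..v} \<subseteq> {w\<in>J. r \<le> w}" using J_between by auto
  then obtain B where "\<forall>w\<in>{r..v}. norm (\<Gamma> r w) \<le> B"
    using bounded_norm_blinfun_on_compact[of "{r..v}" "\<Gamma> r"] continuous_on_subset[OF cont]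
    by blast
  then have "\<forall>\<^sub>F h in at_right 0. norm (\<Gamma> r (v - h)) \<le> B"
    using evr by (auto elim: eventually_mono)
  ultimately have "((\<lambda>h. \<Gamma> r (v - h) ((1 / h) *\<^sub>R (\<Gamma> (v - h) v g - g))) \<longlongrightarrow> \<Gamma> r v L) (at_right 0)"
    using quotient by (rule tendsto_blinfun_apply_bounded)
  moreover have "\<forall>\<^sub>F h in at_right 0.
      \<Gamma> r (v - h) ((1 / h) *\<^sub>R (\<Gamma> (v - h) v g - g)) = (1 / - h) *\<^sub>R (\<Gamma> r (v + - h) g - \<Gamma> r v g)"
    using evr
  proof eventually_elim
    case (elim h)
    then have "\<Gamma> r (v - h) (\<Gamma> (v - h) v g) = \<Gamma> r v g"
      using r J_between by (intro inhom_semigroup_apply_compose[OF sg]) auto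
    then show ?case by (simp add: blinfun.scaleR_right blinfun.diff_right algebra_simps)
  qed
  ultimately have "((\<lambda>h. (1 / - h) *\<^sub>R (\<Gamma> r (v + - h) g - \<Gamma> r v g)) \<longlongrightarrow> \<Gamma> r v L) (at_right 0)"
    by (rule Lim_transform_eventually)
  then show ?thesis by (subst filterlim_at_left_to_right) simp
qed

lemma inhom_semigroup_has_vector_derivative:
  fixes \<Gamma> :: "real \<Rightarrow> real \<Rightarrow> ('y::banach \<Rightarrow>\<^sub>L 'y)"
  assumes sg: "inhom_semigroup J \<Gamma>" and J: "is_interval J" and lims: "gen_lims J \<Gamma> v g L"
    and cont: "\<And>g. continuous_on {w\<in>J. r \<le> w} (\<lambda>w. \<Gamma> r w g)"
    and r: "r \<in> J" "u \<in> J" "r < v" "v < u"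
  shows "((\<lambda>w. \<Gamma> r w g) has_vector_derivative \<Gamma> r v L) (at v)"
proof (intro has_vector_derivative_of_difference_quotient filterlim_split_at)
  have "v \<in> J" using r by (intro mem_is_interval_1_I[OF J r(1) r(2)]) auto
  then show "((\<lambda>h. (1 / h) *\<^sub>R (\<Gamma> r (v + h) g - \<Gamma> r v g)) \<longlongrightarrow> \<Gamma> r v L) (at_left 0)"
    using r by (intro inhom_semigroup_left_quotient[OF sg J lims cont]) auto
  show "((\<lambda>h. (1 / h) *\<^sub>R (\<Gamma> r (v + h) g - \<Gamma> r v g)) \<longlongrightarrow> \<Gamma> r v L) (at_right 0)"
    using r by (intro inhom_semigroup_right_quotient[OF sg J lims]) auto
qed

lemma regular_semigroupD:
  assumes "regular_semigroup J \<iota> \<Gamma>"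
  shows "inhom_semigroup J \<Gamma>"
    and "t \<in> J \<Longrightarrow> gen_dom J \<Gamma> t (\<iota> f)"
    and "s \<in> J \<Longrightarrow> continuous_on {u\<in>J. s \<le> u} (\<lambda>u. \<Gamma> s u g)"
    and "s \<in> J \<Longrightarrow> t \<in> J \<Longrightarrow> s \<le> t \<Longrightarrow>
      set_integrable lborel {s..t} (\<lambda>u. \<Gamma> s u (gen J \<Gamma> u (\<iota> f)))"
  using assms unfolding regular_semigroup_def by blast+

lemma regular_semigroup_integral_gen:
  fixes \<iota> :: "'z::{banach,second_countable_topology} \<Rightarrow> 'y::{banach,second_countable_topology}"
  assumes reg: "regular_semigroup J \<iota> \<Gamma>" and J: "is_interval J"
    and r: "r \<in> J" "u \<in> J" "r \<le> u"
  shows "(LINT v:{r..u}|lborel. \<Gamma> r v (gen J \<Gamma> v (\<iota> f))) = \<Gamma> r u (\<iota> f) - \<iota> f"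
proof -
  note sg = regular_semigroupD(1)[OF reg]
    and cont = regular_semigroupD(3)[OF reg r(1)]
    and int = regular_semigroupD(4)[OF reg r]
  have J_between: "w \<in> J" if "r \<le> w" "w \<le> u" for w
    using r that by (intro mem_is_interval_1_I[OF J r(1) r(2)])
  have "((\<lambda>v. \<Gamma> r v (gen J \<Gamma> v (\<iota> f))) has_integral (\<Gamma> r u (\<iota> f) - \<Gamma> r r (\<iota> f))) {r..u}"
  proof (rule fundamental_theorem_of_calculus_interior[OF r(3)])
    show "continuous_on {r..u} (\<lambda>w. \<Gamma> r w (\<iota> f))"
      using cont by (rule continuous_on_subset) (auto intro: J_between)
  next
    fix v assume v: "v \<in> {r<..<u}"
    then have "gen_lims J \<Gamma> v (\<iota> f) (gen J \<Gamma> v (\<iota> f))"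
      using J r J_between by (intro gen_lims_gen regular_semigroupD(2)[OF reg]) auto
    then show "((\<lambda>w. \<Gamma> r w (\<iota> f)) has_vector_derivative \<Gamma> r v (gen J \<Gamma> v (\<iota> f))) (at v)"
      using v by (intro inhom_semigroup_has_vector_derivative[OF sg J _ cont r(1) r(2)]) auto
  qed
  moreover have "\<Gamma> r r = id_blinfun" using sg r unfolding inhom_semigroup_def by blast
  ultimately show ?thesis using set_lebesgue_integral_eq_has_integral[OF int] by simp
qed

lemma Tn_0 [simp]: "Tn \<tau> 0 \<omega> = 0"
  by (simp add: Tn_def)

lemma Tn_Suc: "Tn \<tau> (Suc n) \<omega> = Tn \<tau> n \<omega> + \<tau> (Suc n) \<omega>"
  by (simp add: Tn_def add.commute)

locale renewal_path =
  fixes \<tau> :: "nat \<Rightarrow> 'w \<Rightarrow> real" and \<omega> :: 'w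
  assumes sojourn_pos: "\<And>k. 1 \<le> k \<Longrightarrow> 0 < \<tau> k \<omega>"
    and finite_jumps_rat: "\<And>r. r \<in> \<rat> \<Longrightarrow> finite {n. Tn \<tau> n \<omega> \<le> r}"
begin

lemma strict_mono_Tn: "strict_mono (\<lambda>n. Tn \<tau> n \<omega>)"
  by (rule strict_mono_Suc_iff[THEN iffD2]) (simp add: Tn_Suc sojourn_pos)

lemma Tn_less_iff: "Tn \<tau> i \<omega> < Tn \<tau> j \<omega> \<longleftrightarrow> i < j"
  using strict_mono_less[OF strict_mono_Tn] by simp

lemma Tn_le_iff: "Tn \<tau> i \<omega> \<le> Tn \<tau> j \<omega> \<longleftrightarrow> i \<le> j"
  using strict_mono_less_eq[OF strict_mono_Tn] by simp

lemma finite_jumps: "finite {n. Tn \<tau> n \<omega> \<le> y}"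
proof (rule finite_subset)
  show "{n. Tn \<tau> n \<omega> \<le> y} \<subseteq> {n. Tn \<tau> n \<omega> \<le> of_int \<lceil>y\<rceil>}"
    by (auto intro: order_trans[OF _ le_of_int_ceiling])
  show "finite {n. Tn \<tau> n \<omega> \<le> of_int \<lceil>y\<rceil>}" by (rule finite_jumps_rat) simp
qed

lemma Nc_le_iff:
  assumes "0 \<le> y"
  shows "n \<le> Nc \<tau> y \<omega> \<longleftrightarrow> Tn \<tau> n \<omega> \<le> y"
proof
  have "{n. Tn \<tau> n \<omega> \<le> y} \<noteq> {}" using assms by (auto intro: exI[of _ 0])
  then have "Nc \<tau> y \<omega> \<in> {n. Tn \<tau> n \<omega> \<le> y}"
    unfolding Nc_def using finite_jumps by (rule Max_in[rotated])
  then show "Tn \<tau> n \<omega> \<le> y" if "n \<le> Nc \<tau> y \<omega>"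
    using that Tn_le_iff[of n "Nc \<tau> y \<omega>"] by simp
qed (auto simp: Nc_def intro: Max_ge[OF finite_jumps])

lemma Tn_Nc_le: "0 \<le> y \<Longrightarrow> Tn \<tau> (Nc \<tau> y \<omega>) \<omega> \<le> y"
  using Nc_le_iff by blast

lemma less_Tn_Suc_Nc: "0 \<le> y \<Longrightarrow> y < Tn \<tau> (Suc (Nc \<tau> y \<omega>)) \<omega>"
  using Nc_le_iff[of y "Suc (Nc \<tau> y \<omega>)"] by auto

lemma Nc_eqI:
  assumes "0 \<le> y" "Tn \<tau> j \<omega> \<le> y" "y < Tn \<tau> (Suc j) \<omega>"
  shows "Nc \<tau> y \<omega> = j"
  using Nc_le_iff[of y j] Nc_le_iff[of y "Suc j"] assms by auto

lemma Nc_mono: "0 \<le> x \<Longrightarrow> x \<le> y \<Longrightarrow> Nc \<tau> x \<omega> \<le> Nc \<tau> y \<omega>"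
  using Nc_le_iff Tn_Nc_le by (meson order_trans)

context
  fixes s :: real
  assumes s_nonneg: "0 \<le> s"
begin

lemma Tks_Suc: "Tks \<tau> s (Suc m) \<omega> = Tn \<tau> (Suc (Nc \<tau> s \<omega> + m)) \<omega>"
  by (simp add: Tks_def)

lemma Tks_less_Suc: "Tks \<tau> s m \<omega> < Tks \<tau> s (Suc m) \<omega>"
  using less_Tn_Suc_Nc[OF s_nonneg] by (cases m) (auto simp: Tks_def Tn_less_iff)

lemma strict_mono_Tks: "strict_mono (\<lambda>m. Tks \<tau> s m \<omega>)"
  by (rule strict_mono_Suc_iff[THEN iffD2]) (simp add: Tks_less_Suc)

lemma Tks_ge: "s \<le> Tks \<tau> s m \<omega>"
  using strict_mono_less_eq[OF strict_mono_Tks, of 0 m] by (simp add: Tks_def)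

lemma Nc_between_Tks:
  assumes "Tks \<tau> s m \<omega> \<le> v" "v < Tks \<tau> s (Suc m) \<omega>"
  shows "Nc \<tau> v \<omega> = Nc \<tau> s \<omega> + m"
proof (rule Nc_eqI)
  show "0 \<le> v" using Tks_ge[of m] assms s_nonneg by simp
  have "Tn \<tau> (Nc \<tau> s \<omega> + m) \<omega> \<le> Tks \<tau> s m \<omega>"
    using Tn_Nc_le[OF s_nonneg] by (cases m) (auto simp: Tks_def)
  then show "Tn \<tau> (Nc \<tau> s \<omega> + m) \<omega> \<le> v" using assms by simp
  show "v < Tn \<tau> (Suc (Nc \<tau> s \<omega> + m)) \<omega>" using assms by (simp add: Tks_Suc)
qed

lemma Ns_xt_between_Tks:
  assumes "Tks \<tau> s m \<omega> \<le> v" "v < Tks \<tau> s (Suc m) \<omega>"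
  shows "Ns \<tau> s v \<omega> = m" "xt \<tau> xs v \<omega> = xks \<tau> xs s m \<omega>"
  using Nc_between_Tks[OF assms] Nc_between_Tks[OF order_refl Tks_less_Suc[of m]]
  by (auto simp: Ns_def xt_def xks_def)

lemma Tks_Ns_bounds:
  assumes "s \<le> t"
  shows "Tks \<tau> s (Ns \<tau> s t \<omega>) \<omega> \<le> t" "t < Tks \<tau> s (Suc (Ns \<tau> s t \<omega>)) \<omega>"
proof -
  have t: "0 \<le> t" using s_nonneg assms by simp
  have N: "Nc \<tau> s \<omega> + Ns \<tau> s t \<omega> = Nc \<tau> t \<omega>"
    using Nc_mono[OF s_nonneg assms] by (simp add: Ns_def)
  show "t < Tks \<tau> s (Suc (Ns \<tau> s t \<omega>)) \<omega>"
    using less_Tn_Suc_Nc[OF t] N by (simp add: Tks_Suc)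
  show "Tks \<tau> s (Ns \<tau> s t \<omega>) \<omega> \<le> t"
    using Tn_Nc_le[OF t] N assms by (cases "Ns \<tau> s t \<omega>") (auto simp: Tks_def)
qed

end

end

locale random_evolution_path = renewal_path \<tau> \<omega>
  for \<tau> :: "nat \<Rightarrow> 'w \<Rightarrow> real" and \<omega> :: 'w +
  fixes xs :: "nat \<Rightarrow> 'w \<Rightarrow> 'x"
    and J :: "real set"
    and \<iota> :: "'z::{banach,second_countable_topology} \<Rightarrow> 'y::{banach,second_countable_topology}"
    and \<Gamma> :: "'x \<Rightarrow> real \<Rightarrow> real \<Rightarrow> ('y \<Rightarrow>\<^sub>L 'y)"
    and D :: "'x \<Rightarrow> 'x \<Rightarrow> ('y \<Rightarrow>\<^sub>L 'y)"
    and s t :: real and f :: 'z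
  assumes J: "is_interval J"
    and regular: "\<And>x. regular_semigroup J \<iota> (\<Gamma> x)"
    and s_nonneg: "0 \<le> s" and s_in_J: "s \<in> J" and t_in_J: "t \<in> J" and s_le_t: "s \<le> t"
begin

abbreviation "Tk k \<equiv> Tks \<tau> s k \<omega>"
abbreviation "xk k \<equiv> xks \<tau> xs s k \<omega>"
abbreviation "V u \<equiv> rand_evol \<tau> xs \<Gamma> D s u \<omega>"
abbreviation "Nst \<equiv> Ns \<tau> s t \<omega>"
abbreviation "drift u \<equiv> V u (gen J (\<Gamma> (xt \<tau> xs u \<omega>)) u (\<iota> f))"
abbreviation "jump k u \<equiv> V u ((D (xk (k - 1)) (xk k) - id_blinfun) (\<iota> f))"

definition jump_prod :: "nat \<Rightarrow> ('y \<Rightarrow>\<^sub>L 'y)" where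
  "jump_prod m = prodL m (\<lambda>k. \<Gamma> (xk (k - 1)) (Tk (k - 1)) (Tk k) o\<^sub>L D (xk (k - 1)) (xk k))"

lemma jump_prod_0 [simp]: "jump_prod 0 = id_blinfun"
  by (simp add: jump_prod_def)

lemma jump_prod_Suc:
  "jump_prod (Suc m) = jump_prod m o\<^sub>L (\<Gamma> (xk m) (Tk m) (Tk (Suc m)) o\<^sub>L D (xk m) (xk (Suc m)))"
  by (simp add: jump_prod_def)

lemma rand_evol_between_jumps:
  assumes "Tk m \<le> v" "v < Tk (Suc m)"
  shows "V v = jump_prod m o\<^sub>L \<Gamma> (xk m) (Tk m) v"
  using Ns_xt_between_Tks(1)[OF s_nonneg assms] Ns_xt_between_Tks(2)[OF s_nonneg assms, of xs]
  by (simp add: rand_evol_def jump_prod_def)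

lemma Tk_le_t: "m \<le> Nst \<Longrightarrow> Tk m \<le> t"
  using strict_mono_less_eq[OF strict_mono_Tks[OF s_nonneg]] Tks_Ns_bounds(1)[OF s_nonneg s_le_t]
  by (meson order_trans)

lemma in_J_if_between: "s \<le> u \<Longrightarrow> u \<le> t \<Longrightarrow> u \<in> J"
  by (rule mem_is_interval_1_I[OF J s_in_J t_in_J])

lemma Tk_in_J: "m \<le> Nst \<Longrightarrow> Tk m \<in> J"
  using Tk_le_t Tks_ge[OF s_nonneg] in_J_if_between by blast

lemma rand_evol_left_limit:
  assumes m: "m < Nst"
  shows "((\<lambda>u. V u y) \<longlongrightarrow> jump_prod m (\<Gamma> (xk m) (Tk m) (Tk (Suc m)) y)) (at_left (Tk (Suc m)))"
proof -
  have less: "Tk m < Tk (Suc m)" by (rule Tks_less_Suc[OF s_nonneg])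
  have J_Suc: "Tk (Suc m) \<in> J" using m by (intro Tk_in_J) simp
  have "continuous_on {w\<in>J. Tk m \<le> w} (\<lambda>w. \<Gamma> (xk m) (Tk m) w y)"
    using Tk_in_J[of m] m by (intro regular_semigroupD(3)[OF regular]) simp
  then have "((\<lambda>w. \<Gamma> (xk m) (Tk m) w y) \<longlongrightarrow> \<Gamma> (xk m) (Tk m) (Tk (Suc m)) y)
      (at (Tk (Suc m)) within {w\<in>J. Tk m \<le> w})"
    using J_Suc less unfolding continuous_on_def by auto
  moreover have "at_left (Tk (Suc m)) \<le> at (Tk (Suc m)) within {w\<in>J. Tk m \<le> w}"
  proof -
    have "at_left (Tk (Suc m)) = at (Tk (Suc m)) within {Tk m<..<Tk (Suc m)}"
      by (rule at_within_nhd[of _ "{Tk m<..}"]) (use less in auto)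
    moreover have "{Tk m<..<Tk (Suc m)} \<subseteq> {w\<in>J. Tk m \<le> w}"
      using mem_is_interval_1_I[OF J Tk_in_J[of m] J_Suc] m by auto
    ultimately show ?thesis by (simp add: at_le)
  qed
  ultimately have "((\<lambda>w. \<Gamma> (xk m) (Tk m) w y) \<longlongrightarrow> \<Gamma> (xk m) (Tk m) (Tk (Suc m)) y)
      (at_left (Tk (Suc m)))"
    by (rule tendsto_mono[rotated])
  then have "((\<lambda>u. jump_prod m (\<Gamma> (xk m) (Tk m) u y)) \<longlongrightarrow>
      jump_prod m (\<Gamma> (xk m) (Tk m) (Tk (Suc m)) y)) (at_left (Tk (Suc m)))"
    by (rule blinfun.tendsto[OF tendsto_const])
  moreover have "\<forall>\<^sub>F u in at_left (Tk (Suc m)). jump_prod m (\<Gamma> (xk m) (Tk m) u y) = V u y"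
  proof -
    have "\<forall>\<^sub>F u in at_left (Tk (Suc m)). Tk m < u \<and> u < Tk (Suc m)"
      unfolding eventually_at_left_field using less by auto
    then show ?thesis
    proof eventually_elim
      case (elim u)
      then show ?case using rand_evol_between_jumps[of m u] by simp
    qed
  qed
  ultimately show ?thesis by (rule Lim_transform_eventually)
qed

lemma jump_term_eq:
  assumes "m < Nst"
  shows "Lim (at_left (Tk (Suc m))) (jump (Suc m)) =
    jump_prod (Suc m) (\<iota> f) - jump_prod m (\<Gamma> (xk m) (Tk m) (Tk (Suc m)) (\<iota> f))"
proof -
  have "Lim (at_left (Tk (Suc m))) (jump (Suc m)) =
      jump_prod m (\<Gamma> (xk m) (Tk m) (Tk (Suc m)) ((D (xk m) (xk (Suc m)) - id_blinfun) (\<iota> f)))"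
    using rand_evol_left_limit[OF assms] by (intro tendsto_Lim) simp_all
  then show ?thesis by (simp add: jump_prod_Suc blinfun.diff_right blinfun.diff_left)
qed

text \<open>On \<open>[T_m, u]\<close> the integrand agrees with \<open>P_m \<Gamma>_{x_m}(T_m, v) A_{x_m}(v)\<close> except
  possibly at \<open>v = u = T_{m+1}\<close>, a null set.\<close>

lemma drift_integral_between_jumps:
  assumes m: "m \<le> Nst" and u: "Tk m \<le> u" "u \<le> t" "u \<le> Tk (Suc m)"
  shows "set_integrable lborel {Tk m..u} drift"
    and "(LINT v:{Tk m..u}|lborel. drift v) = jump_prod m (\<Gamma> (xk m) (Tk m) u (\<iota> f) - \<iota> f)"
proof -
  let ?A = "\<lambda>v. \<Gamma> (xk m) (Tk m) v (gen J (\<Gamma> (xk m)) v (\<iota> f))"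
  have Tm: "Tk m \<in> J" using m by (rule Tk_in_J)
  have uJ: "u \<in> J" using Tks_ge[OF s_nonneg, of m] u by (intro in_J_if_between) auto
  have int_A: "integrable lborel (\<lambda>v. indicator {Tk m..u} v *\<^sub>R ?A v)"
    using regular_semigroupD(4)[OF regular Tm uJ u(1)] unfolding set_integrable_def .
  have lin: "(\<lambda>v. indicator {Tk m..u} v *\<^sub>R jump_prod m (?A v)) =
      (\<lambda>v. jump_prod m (indicator {Tk m..u} v *\<^sub>R ?A v))"
    by (simp add: blinfun.scaleR_right)
  have int_PA: "integrable lborel (\<lambda>v. indicator {Tk m..u} v *\<^sub>R jump_prod m (?A v))"
    unfolding lin by (rule integrable_bounded_linear[OF blinfun.bounded_linear_right int_A])
  have int_eq: "(LINT v|lborel. indicator {Tk m..u} v *\<^sub>R jump_prod m (?A v)) =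
      jump_prod m (\<Gamma> (xk m) (Tk m) u (\<iota> f) - \<iota> f)"
    unfolding lin integral_bounded_linear[OF blinfun.bounded_linear_right int_A]
    using regular_semigroup_integral_gen[OF regular J Tm uJ u(1)]
    by (simp add: set_lebesgue_integral_def)
  have agree: "indicator {Tk m..u} v *\<^sub>R jump_prod m (?A v) = indicator {Tk m..u} v *\<^sub>R drift v"
    if "v \<notin> {u}" for v
  proof (cases "v \<in> {Tk m..u}")
    case True
    then have v: "Tk m \<le> v" "v < Tk (Suc m)" using that u by auto
    then show ?thesis
      using Ns_xt_between_Tks(2)[OF s_nonneg v, of xs] by (simp add: rand_evol_between_jumps)
  qed simp
  have "integrable lborel (\<lambda>v. indicator {Tk m..u} v *\<^sub>R drift v)"
    using integrable_discrete_difference[of "{u}" lborel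
        "\<lambda>v. indicator {Tk m..u} v *\<^sub>R jump_prod m (?A v)" "\<lambda>v. indicator {Tk m..u} v *\<^sub>R drift v"]
      int_PA agree by simp
  then show "set_integrable lborel {Tk m..u} drift" unfolding set_integrable_def .
  show "(LINT v:{Tk m..u}|lborel. drift v) = jump_prod m (\<Gamma> (xk m) (Tk m) u (\<iota> f) - \<iota> f)"
    using integral_discrete_difference[of "{u}" lborel
        "\<lambda>v. indicator {Tk m..u} v *\<^sub>R jump_prod m (?A v)" "\<lambda>v. indicator {Tk m..u} v *\<^sub>R drift v"]
      int_eq agree
    unfolding set_lebesgue_integral_def by simp
qed

lemma rand_evol_expansion_upto:
  assumes "m \<le> Nst" "Tk m \<le> u" "u \<le> t" "u \<le> Tk (Suc m)"
  shows "set_integrable lborel {s..u} drift \<and>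
    jump_prod m (\<Gamma> (xk m) (Tk m) u (\<iota> f)) =
      \<iota> f + (LINT v:{s..u}|lborel. drift v) + (\<Sum>k\<in>{1..m}. Lim (at_left (Tk k)) (jump k))"
  using assms
proof (induction m arbitrary: u)
  case 0
  then show ?case
    using drift_integral_between_jumps[of 0 u] by (simp add: Tks_def blinfun.diff_right)
next
  case (Suc m)
  let ?T = "Tk (Suc m)"
  have m: "m < Nst" using Suc.prems(1) by simp
  have "?T \<le> t" using Suc.prems(1) by (rule Tk_le_t)
  then have IH: "set_integrable lborel {s..?T} drift"
    "jump_prod m (\<Gamma> (xk m) (Tk m) ?T (\<iota> f)) =
      \<iota> f + (LINT v:{s..?T}|lborel. drift v) + (\<Sum>k\<in>{1..m}. Lim (at_left (Tk k)) (jump k))"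
    using Suc.IH[of ?T] m Tks_less_Suc[OF s_nonneg, of m] by auto
  note last = drift_integral_between_jumps[OF Suc.prems]
  have split: "{s..u} = {s..?T} \<union> {?T..u}" using Suc.prems Tks_ge[OF s_nonneg, of "Suc m"] by auto
  have "AE v in lborel. \<not> (v \<in> {s..?T} \<and> v \<in> {?T..u})"
    using AE_lborel_singleton[of ?T] by eventually_elim auto
  then have integral_split: "(LINT v:{s..u}|lborel. drift v) =
      (LINT v:{s..?T}|lborel. drift v) + (LINT v:{?T..u}|lborel. drift v)"
    unfolding split using IH(1) last(1) by (intro set_integral_Un_AE) auto
  have integrable: "set_integrable lborel {s..u} drift"
    unfolding split using IH(1) last(1) by (intro set_integrable_Un) auto
  have "\<iota> f + (LINT v:{s..u}|lborel. drift v) + (\<Sum>k\<in>{1..Suc m}. Lim (at_left (Tk k)) (jump k)) =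
      jump_prod m (\<Gamma> (xk m) (Tk m) ?T (\<iota> f)) + Lim (at_left ?T) (jump (Suc m))
        + (LINT v:{?T..u}|lborel. drift v)"
    unfolding integral_split IH(2) by simp
  also have "\<dots> = jump_prod (Suc m) (\<Gamma> (xk (Suc m)) ?T u (\<iota> f))"
    unfolding jump_term_eq[OF m] last(2) by (simp add: blinfun.diff_right)
  finally show ?case using integrable by simp
qed

lemma rand_evol_expansion:
  "(\<forall>k\<in>{1..Nst}. \<exists>L. (jump k \<longlongrightarrow> L) (at_left (Tk k)))
    \<and> set_integrable lborel {s..t} drift
    \<and> V t (\<iota> f) = \<iota> f + (LINT v:{s..t}|lborel. drift v) + (\<Sum>k\<in>{1..Nst}. Lim (at_left (Tk k)) (jump k))"
proof (intro conjI)
  show "\<forall>k\<in>{1..Nst}. \<exists>L. (jump k \<longlongrightarrow> L) (at_left (Tk k))"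
  proof
    fix k assume "k \<in> {1..Nst}"
    then obtain m where "k = Suc m" "m < Nst" by (cases k) auto
    then show "\<exists>L. (jump k \<longlongrightarrow> L) (at_left (Tk k))" using rand_evol_left_limit by auto
  qed
  note bounds = Tks_Ns_bounds[OF s_nonneg s_le_t]
  show "set_integrable lborel {s..t} drift"
    using rand_evol_expansion_upto[of Nst t] bounds by simp
  show "V t (\<iota> f) = \<iota> f + (LINT v:{s..t}|lborel. drift v) + (\<Sum>k\<in>{1..Nst}. Lim (at_left (Tk k)) (jump k))"
    using rand_evol_expansion_upto[of Nst t] bounds rand_evol_between_jumps[OF bounds] by simp
qed

end

theorem proposition3p4:
  fixes M :: "'w measure"
    and xs :: "nat \<Rightarrow> 'w \<Rightarrow> 'x::finite"
    and \<tau> :: "nat \<Rightarrow> 'w \<Rightarrow> real"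
    and Q :: "'x \<Rightarrow> 'x \<Rightarrow> real \<Rightarrow> real"
    and J :: "real set"
    and \<iota> :: "'z::{banach,second_countable_topology} \<Rightarrow> 'y::{banach,second_countable_topology}"
    and \<Gamma> :: "'x \<Rightarrow> real \<Rightarrow> real \<Rightarrow> ('y \<Rightarrow>\<^sub>L 'y)"
    and D :: "'x \<Rightarrow> 'x \<Rightarrow> ('y \<Rightarrow>\<^sub>L 'y)"
    and s t :: real and f :: 'z and \<omega> :: 'w
  assumes "prob_space M"
    and "complete_measure M"
    and "markov_renewal M xs \<tau> Q"
    and "semi_markov_kernel Q"
    and "\<forall>\<omega>'\<in>space M. \<forall>r\<in>\<rat>. finite {n. Tn \<tau> n \<omega>' \<le> r}"
    and "J = {0..} \<or> (\<exists>T>0. J = {0..T})"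
    and "bounded_linear \<iota>" and "inj \<iota>"
    and "\<forall>x. regular_semigroup J \<iota> (\<Gamma> x)"
    and "\<forall>x. (\<lambda>(r, r', g). blinfun_apply (\<Gamma> x (min r r') (max r r')) g)
               \<in> borel_measurable (restrict_space borel (J \<times> J \<times> UNIV))"
    and "\<forall>x y. norm (D x y) \<le> 1"
    and "\<omega> \<in> space M" and "s \<in> J" and "t \<in> J" and "s \<le> t"
  shows "(\<forall>k\<in>{1..Ns \<tau> s t \<omega>}. \<exists>L.
            ((\<lambda>u. blinfun_apply (rand_evol \<tau> xs \<Gamma> D s u \<omega>)
                    (blinfun_apply (D (xks \<tau> xs s (k - 1) \<omega>) (xks \<tau> xs s k \<omega>) - id_blinfun) (\<iota> f)))
              \<longlongrightarrow> L) (at_left (Tks \<tau> s k \<omega>)))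
       \<and> set_integrable lborel {s..t}
           (\<lambda>u. blinfun_apply (rand_evol \<tau> xs \<Gamma> D s u \<omega>) (gen J (\<Gamma> (xt \<tau> xs u \<omega>)) u (\<iota> f)))
       \<and> blinfun_apply (rand_evol \<tau> xs \<Gamma> D s t \<omega>) (\<iota> f)
           = \<iota> f
             + set_lebesgue_integral lborel {s..t}
                 (\<lambda>u. blinfun_apply (rand_evol \<tau> xs \<Gamma> D s u \<omega>) (gen J (\<Gamma> (xt \<tau> xs u \<omega>)) u (\<iota> f)))
             + (\<Sum>k\<in>{1..Ns \<tau> s t \<omega>}.
                  Lim (at_left (Tks \<tau> s k \<omega>))
                    (\<lambda>u. blinfun_apply (rand_evol \<tau> xs \<Gamma> D s u \<omega>)
                      (blinfun_apply (D (xks \<tau> xs s (k - 1) \<omega>) (xks \<tau> xs s k \<omega>) - id_blinfun) (\<iota> f))))"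
proof -
  interpret random_evolution_path \<tau> \<omega> xs J \<iota> \<Gamma> D s t f
  proof
    show "0 < \<tau> k \<omega>" if "1 \<le> k" for k
      using assms(3,12) that unfolding markov_renewal_def by blast
    show "finite {n. Tn \<tau> n \<omega> \<le> r}" if "r \<in> \<rat>" for r
      using assms(5,12) that by blast
    show "is_interval J" "0 \<le> s"
      using assms(6,13) by (auto simp: is_interval_1)
  qed (use assms in auto)
  show ?thesis by (rule rand_evol_expansion)
qed

end
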